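(* Let $n\ge0$, let $P_k=s_k\vec e_k\in\mathbb{R}^{n+1}$ for $0\le k\le n$, and let $Q=(i_0,\dots,i_n)\in\mathbb{Z}^{n+1}$ with $0\le i_k\le s_k-1$ for all $k$ and $\sum_{k=0}^nd_{n,k}i_k<d_n$. Let $0\le j\le n$ be an index with $i_j\ne0$, and let $w(x_0,\dots,x_n)=\sum_{k=0}^nw_kx_k$ be a linear function with $w(Q)=d_n$ and $w(P_k)=d_n$ for all $k\ne j$. Then (1) $\sum_{k=0}^nw_k\ge d_n$; and (2) if $\sum_{k=0}^nw_k=d_n$, then $\sum_{k=0}^{n-1}d_{n-1,k}i_k+i_n=d_{n-1}$.
   Context: Sylvester numbers: $s_0=2$, $s_{k+1}=1+\prod_{i=0}^ks_i$. For $m\ge0$, $d_m=\prod_{k=0}^ms_k$ and $d_{m,k}=d_m/s_k$. $\vec e_0,\dots,\vec e_n$ is the standard basis of $\mathbb{R}^{n+1}$. *)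

theory Defs
  imports Complex_Main
begin

fun sylv :: "nat \<Rightarrow> nat" where
  "sylv 0 = 2"
| "sylv (Suc k) = 1 + (\<Prod>i\<in>{..k}. sylv i)"

definition sylv_d :: "nat \<Rightarrow> nat" where
  "sylv_d m = (\<Prod>k\<in>{..m}. sylv k)"

text \<open>d_{m,k} = d_m / s_k (exact division, as s_k divides d_m for k \<le> m).\<close>
definition sylv_dk :: "nat \<Rightarrow> nat \<Rightarrow> nat" where
  "sylv_dk m k = sylv_d m div sylv k"

text \<open>Prefix product prod_{k<m} s k, i.e. d_{m-1}, with the empty-product
  convention d_{-1} = 1 when m = 0.\<close>
definition sylv_dpre :: "nat \<Rightarrow> nat" where
  "sylv_dpre m = (\<Prod>k\<in>{..<m}. sylv k)"

text \<open>Points of R^{n+1} are represented as functions nat \<Rightarrow> real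
  (only coordinates 0..n matter). The point P_k = s_k e_k.\<close>
definition sylvP :: "nat \<Rightarrow> (nat \<Rightarrow> real)" where
  "sylvP k = (\<lambda>m. if m = k then real (sylv k) else 0)"

definition linfun :: "nat \<Rightarrow> (nat \<Rightarrow> real) \<Rightarrow> (nat \<Rightarrow> real) \<Rightarrow> real" where
  "linfun n w x = (\<Sum>k\<in>{..n}. w k * x k)"

end

theory Submission
  imports Defs
begin

text \<open>Evaluating w at the points P_k forces w_k = d_{n,k} for every k \<noteq> j, so w differs
  from the weights (d_{n,k})_k only in coordinate j, say by c.
  With the defect T = d_n - \<Sum>_k d_{n,k} i_k > 0, the condition w(Q) = d_n reads c i_j = T,
  and \<Sum>_k w_k = d_n - 1 + c since \<Sum>_k d_{n,k} = d_n - 1.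
  Modulo s_m every d_{n,k} with k \<noteq> m vanishes while d_{n,m} \<equiv> -1, so T \<equiv> i_m (mod s_m).
  For m = j this gives T \<ge> i_j > 0, hence c \<ge> 1.
  If c = 1 then T = i_j, and comparing residues modulo s_n \<ge> s_j gives T = i_n, which after
  dividing by s_n = d_{n-1} + 1 is the claimed identity.\<close>

lemma sum_eq_sum_except_one:
  fixes f g :: "'a \<Rightarrow> 'b :: ab_group_add"
  assumes "finite A" "j \<in> A" "\<And>k. k \<in> A \<Longrightarrow> k \<noteq> j \<Longrightarrow> f k = g k"
  shows "sum f A = sum g A + (f j - g j)"
  using assms by (simp add: sum.remove)

lemma eq_mod_of_dvd_diff:
  fixes x y m :: int
  assumes "m dvd x - y" "0 \<le> y" "y < m"
  shows "y = x mod m"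
proof -
  have "x mod m = y mod m"
    using assms(1) by (simp add: mod_eq_dvd_iff)
  then show ?thesis
    using assms(2,3) by (simp add: mod_pos_pos_trivial)
qed

lemma sylv_pos: "0 < sylv m"
  by (cases m) auto

lemma sylv_dpre_Suc: "sylv_dpre (Suc n) = sylv_d n"
  by (simp add: sylv_dpre_def sylv_d_def lessThan_Suc_atMost)

lemma sylv_eq_Suc_sylv_dpre: "sylv m = Suc (sylv_dpre m)"
  by (cases m) (auto simp: sylv_dpre_def lessThan_Suc_atMost)

lemma sylv_Suc_eq_Suc_sylv_d: "sylv (Suc n) = Suc (sylv_d n)"
  by (simp add: sylv_d_def)

lemma sylv_d_Suc: "sylv_d (Suc n) = sylv_d n * sylv (Suc n)"
  by (simp add: sylv_d_def del: sylv.simps)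

lemma sylv_dvd_sylv_d: "m \<le> n \<Longrightarrow> sylv m dvd sylv_d n"
  unfolding sylv_d_def by (auto intro: dvd_prodI)

lemma sylv_mono: "j \<le> n \<Longrightarrow> sylv j \<le> sylv n"
proof (induction n rule: dec_induct)
  case (step m)
  have "sylv m \<le> sylv_d m"
    using sylv_dvd_sylv_d[of m m] by (simp add: dvd_imp_le sylv_d_def prod_pos sylv_pos)
  then show ?case
    using step.IH sylv_Suc_eq_Suc_sylv_d[of m] by linarith
qed simp

lemma sylv_d_eq: "sylv_d n = sylv_dpre n * sylv n"
  by (simp add: sylv_d_def sylv_dpre_def flip: lessThan_Suc_atMost)

lemma sylv_dk_eq_prod: "k \<le> n \<Longrightarrow> sylv_dk n k = (\<Prod>m\<in>{..n}-{k}. sylv m)"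
  using sylv_pos[of k]
  by (simp add: sylv_dk_def sylv_d_def prod.remove)

lemma sylv_dk_mult: "k \<le> n \<Longrightarrow> sylv_dk n k * sylv k = sylv_d n"
  by (simp add: sylv_dk_eq_prod sylv_d_def prod.remove)

lemma sylv_dk_self: "sylv_dk n n = sylv_dpre n"
  using sylv_pos[of n] by (simp add: sylv_dk_def sylv_d_eq)

lemma sylv_dk_Suc:
  assumes "k \<le> n"
  shows "sylv_dk (Suc n) k = sylv_dk n k * sylv (Suc n)"
proof -
  have "{..Suc n}-{k} = insert (Suc n) ({..n}-{k})"
    using assms by auto
  with assms show ?thesis
    by (simp add: sylv_dk_eq_prod del: sylv.simps)
qed

lemma sylv_dk_less:
  assumes "k < n"
  shows "sylv_dk n k = sylv n * (sylv_dpre n div sylv k)"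
proof -
  have "sylv_dpre n = sylv k * (\<Prod>m\<in>{..<n}-{k}. sylv m)"
    using assms by (simp add: sylv_dpre_def prod.remove)
  moreover have "{..n}-{k} = insert n ({..<n}-{k})"
    using assms by auto
  ultimately show ?thesis
    using assms sylv_pos[of k] by (simp add: sylv_dk_eq_prod)
qed

text \<open>The identity \<Sum>_k 1/s_k + 1/d_n = 1, cleared of denominators.\<close>

lemma sum_sylv_dk: "(\<Sum>k\<in>{..n}. sylv_dk n k) + 1 = sylv_d n"
proof (induction n)
  case 0
  then show ?case by (simp add: sylv_dk_self sylv_dpre_def sylv_d_def)
next
  case (Suc n)
  have "(\<Sum>k\<in>{..Suc n}. sylv_dk (Suc n) k) + 1
      = (\<Sum>k\<in>{..n}. sylv_dk n k) * sylv (Suc n) + sylv_d n + 1"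
    by (simp add: sylv_dk_Suc sylv_dk_self sylv_dpre_Suc sum_distrib_right del: sylv.simps)
  also have "\<dots> = ((\<Sum>k\<in>{..n}. sylv_dk n k) + 1) * sylv (Suc n)"
    by (simp add: sylv_Suc_eq_Suc_sylv_d algebra_simps del: sylv.simps)
  also have "\<dots> = sylv_d (Suc n)"
    by (simp only: Suc.IH sylv_d_Suc)
  finally show ?case .
qed

lemma sylv_dvd_sylv_dk: "k \<le> n \<Longrightarrow> m \<le> n \<Longrightarrow> k \<noteq> m \<Longrightarrow> sylv m dvd sylv_dk n k"
  by (auto simp: sylv_dk_eq_prod intro: dvd_prodI)

lemma sylv_dvd_Suc_sylv_dk_self: "m \<le> n \<Longrightarrow> sylv m dvd Suc (sylv_dk n m)"
proof (induction n)
  case 0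
  then show ?case by (simp add: sylv_dk_self sylv_dpre_def)
next
  case (Suc n)
  show ?case
  proof (cases "m = Suc n")
    case True
    then show ?thesis by (simp add: sylv_dk_self flip: sylv_eq_Suc_sylv_dpre)
  next
    case False
    then have "m \<le> n" using Suc.prems by simp
    then have "Suc (sylv_dk (Suc n) m) = Suc (sylv_dk n m) + sylv_dk n m * sylv_d n"
      by (simp add: sylv_dk_Suc sylv_Suc_eq_Suc_sylv_d algebra_simps del: sylv.simps)
    moreover have "sylv m dvd Suc (sylv_dk n m) + sylv_dk n m * sylv_d n"
      using \<open>m \<le> n\<close> by (intro dvd_add Suc.IH dvd_mult sylv_dvd_sylv_d)
    ultimately show ?thesis by simp
  qed
qed

definition sylv_defect :: "nat \<Rightarrow> (nat \<Rightarrow> int) \<Rightarrow> int" where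
  "sylv_defect n i = int (sylv_d n) - (\<Sum>k\<in>{..n}. int (sylv_dk n k) * i k)"

lemma sylv_dvd_sylv_defect_minus:
  assumes "m \<le> n"
  shows "int (sylv m) dvd sylv_defect n i - i m"
proof -
  have "sylv_defect n i - i m
      = int (sylv_d n) - (\<Sum>k\<in>{..n}-{m}. int (sylv_dk n k) * i k) - int (Suc (sylv_dk n m)) * i m"
    using assms by (simp add: sylv_defect_def sum.remove algebra_simps)
  moreover have "int (sylv m) dvd (\<Sum>k\<in>{..n}-{m}. int (sylv_dk n k) * i k)"
    using assms by (intro dvd_sum dvd_mult2) (simp add: sylv_dvd_sylv_dk)
  ultimately show ?thesis
    using assms sylv_dvd_sylv_d sylv_dvd_Suc_sylv_dk_self
    by (metis dvd_diff dvd_mult2 int_dvd_int_iff)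
qed

lemma sylv_defect_mod_sylv:
  "m \<le> n \<Longrightarrow> 0 \<le> i m \<Longrightarrow> i m < int (sylv m) \<Longrightarrow> sylv_defect n i mod int (sylv m) = i m"
  using eq_mod_of_dvd_diff sylv_dvd_sylv_defect_minus by metis

lemma sylv_weighted_sum_split:
  fixes i :: "nat \<Rightarrow> int"
  shows "(\<Sum>k\<in>{..n}. int (sylv_dk n k) * i k)
    = int (sylv n) * (\<Sum>k\<in>{..<n}. int (sylv_dpre n div sylv k) * i k) + int (sylv_dpre n) * i n"
  by (simp add: sum_distrib_left sylv_dk_less sylv_dk_self algebra_simps flip: lessThan_Suc_atMost)

lemma sylv_prefix_identity_of_defect:
  assumes irange: "\<And>k. k \<le> n \<Longrightarrow> 0 \<le> i k \<and> i k \<le> int (sylv k) - 1"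
    and "j \<le> n" and defect: "sylv_defect n i = i j"
  shows "(\<Sum>k\<in>{..<n}. int (sylv_dpre n div sylv k) * i k) + i n = int (sylv_dpre n)"
proof -
  have "i j < int (sylv n)"
    using irange[OF \<open>j \<le> n\<close>] sylv_mono[OF \<open>j \<le> n\<close>] by linarith
  then have "i n = i j"
    using sylv_defect_mod_sylv[of n n i] irange[of n] irange[OF \<open>j \<le> n\<close>]
    by (simp add: defect mod_pos_pos_trivial)
  then have "int (sylv n) * (\<Sum>k\<in>{..<n}. int (sylv_dpre n div sylv k) * i k)
      + int (sylv_dpre n) * i n + i n = int (sylv_dpre n) * int (sylv n)"
    using defect by (simp add: sylv_defect_def sylv_weighted_sum_split sylv_d_eq)
  then have "int (sylv n) * ((\<Sum>k\<in>{..<n}. int (sylv_dpre n div sylv k) * i k) + i n)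
      = int (sylv n) * int (sylv_dpre n)"
    by (simp add: sylv_eq_Suc_sylv_dpre[of n] algebra_simps)
  then show ?thesis
    using sylv_pos[of n] by simp
qed

lemma linfun_sylvP: "k \<le> n \<Longrightarrow> linfun n w (sylvP k) = w k * sylv k"
  by (simp add: linfun_def sylvP_def if_distrib cong: if_cong)

lemma weight_eq_sylv_dk_of_linfun_sylvP:
  assumes "k \<le> n" "linfun n w (sylvP k) = real (sylv_d n)"
  shows "w k = sylv_dk n k"
proof -
  have "w k * sylv k = sylv_dk n k * sylv k"
    using assms linfun_sylvP[OF assms(1)] sylv_dk_mult[OF assms(1)] by simp
  then show ?thesis
    using sylv_pos[of k] by simp
qed

theorem lemma5p1:
  fixes n j :: nat and i :: "nat \<Rightarrow> int" and w :: "nat \<Rightarrow> real"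
  assumes irange: "\<And>k. k \<le> n \<Longrightarrow> 0 \<le> i k \<and> i k \<le> int (sylv k) - 1"
    and isum: "(\<Sum>k\<in>{..n}. int (sylv_dk n k) * i k) < int (sylv_d n)"
    and j: "j \<le> n" and ij: "i j \<noteq> 0"
    and wQ: "linfun n w (\<lambda>k. real_of_int (i k)) = real (sylv_d n)"
    and wP: "\<And>k. k \<le> n \<Longrightarrow> k \<noteq> j \<Longrightarrow> linfun n w (sylvP k) = real (sylv_d n)"
  shows "(\<Sum>k\<in>{..n}. w k) \<ge> real (sylv_d n)
    \<and> ((\<Sum>k\<in>{..n}. w k) = real (sylv_d n) \<longrightarrow>
         (\<Sum>k\<in>{..<n}. int (sylv_dpre n div sylv k) * i k) + i n = int (sylv_dpre n))"
proof -
  define c where "c = w j - sylv_dk n j"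
  have w_eq: "w k = sylv_dk n k" if "k \<le> n" "k \<noteq> j" for k
    using that wP by (simp add: weight_eq_sylv_dk_of_linfun_sylvP)
  have "real (sylv_d n) = (\<Sum>k\<in>{..n}. sylv_dk n k * i k) + c * i j"
    using wQ sum_eq_sum_except_one[of "{..n}" j "\<lambda>k. w k * i k" "\<lambda>k. sylv_dk n k * i k"] w_eq j
    by (simp add: linfun_def c_def algebra_simps)
  then have c_times_ij: "c * i j = sylv_defect n i"
    by (simp add: sylv_defect_def)
  have sum_w: "(\<Sum>k\<in>{..n}. w k) = real (sylv_d n) - 1 + c"
    using sum_eq_sum_except_one[of "{..n}" j w "\<lambda>k. sylv_dk n k"] w_eq j sum_sylv_dk[of n]
    by (simp add: c_def flip: of_nat_sum)
  have "0 < i j" and "i j = sylv_defect n i mod int (sylv j)"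
    using irange[OF j] ij sylv_defect_mod_sylv[OF j] by auto
  moreover have "0 < sylv_defect n i"
    using isum by (simp add: sylv_defect_def)
  ultimately have "real_of_int (i j) \<le> c * real_of_int (i j)"
    using c_times_ij by (simp add: zmod_le_nonneg_dividend)
  then have "1 \<le> c"
    using \<open>0 < i j\<close> by (simp add: mult_le_cancel_right1)
  moreover have "c = 1 \<Longrightarrow> sylv_defect n i = i j"
    using c_times_ij by simp
  ultimately show ?thesis
    using sum_w sylv_prefix_identity_of_defect[OF irange j] by auto
qed

end
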